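(* Let $p$ be a prime, let $f(x)\in\mathbb{Z}_p[x]$, let $\alpha,n\in\mathbb{N}=\{0,1,2,\dots\}$ and $r\in\mathbb{Z}$. Then $$\operatorname{ord}_p\Bigg(\sum_{k\equiv r\ (\mathrm{mod}\ p^{\alpha})}\binom nk(-1)^kf\Big(\frac{k-r}{p^{\alpha}}\Big)\Bigg)\ \geqslant\ \operatorname{ord}_p\Big(\Big\lfloor\frac n{p^{\alpha-1}}\Big\rfloor!\Big)-\deg f+\tau_p\big(\{r\}_{p^{\alpha-1}},\{n-r\}_{p^{\alpha-1}}\big).$$ Equivalently, $p^{\deg f}\sum_{k\equiv r\,(\mathrm{mod}\ p^{\alpha})}\binom nk(-1)^kf\big(\frac{k-r}{p^{\alpha}}\big)\equiv 0 \pmod{p^{\sum_{i=\alpha}^{\infty}\lfloor n/p^i\rfloor+\tau_p(\{r\}_{p^{\alpha-1}},\{n-r\}_{p^{\alpha-1}})}}$.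
   Context: The sum runs over all integers $k$ with $k\equiv r \pmod{p^\alpha}$; $\binom nk=0$ unless $0\le k\le n$, so it is finite. $\mathbb{Z}_p$ is the ring of $p$-adic integers; for $\omega\in\mathbb{Q}_p\setminus\{0\}$, $\operatorname{ord}_p(\omega)=\max\{a\in\mathbb{Z}:\omega/p^a\in\mathbb{Z}_p\}$ and $\operatorname{ord}_p(0)=+\infty$. The degree of the zero polynomial is $-\infty$. For an integer $a$ and a positive real $m$, $\{a\}_m$ denotes the unique number in $[0,m)$ with $a-\{a\}_m\in m\mathbb{Z}$ (so for $m=p^{-1}$, $\{a\}_m=0$). For $a,b\in\mathbb{N}$, $\tau_p(a,b)$ is the number of carries when adding $a$ and $b$ in base $p$ (equivalently $\operatorname{ord}_p\binom{a+b}{a}$). When $\alpha=0$, $\lfloor n/p^{-1}\rfloor=pn$. *)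

theory Defs
  imports "HOL-Computational_Algebra.Polynomial" "HOL-Computational_Algebra.Primes"
          "HOL-Number_Theory.Cong"
begin

text \<open>p-adic integers are modelled via the inverse limit Z_p = lim Z/p^m Z:
  an element is a sequence x :: nat => int of integer approximations with
  x (Suc m) == x m (mod p^m).  A polynomial f in Z_p[x] is modelled likewise
  as a sequence F :: nat => int poly of integer polynomials of uniformly
  bounded degree whose coefficients are coherent in this sense; the i-th
  coefficient of f is the p-adic integer (m => coeff (F m) i).\<close>

definition padic_poly_seq :: "nat \<Rightarrow> (nat \<Rightarrow> int poly) \<Rightarrow> bool" where
  "padic_poly_seq p F \<longleftrightarrow>
     (\<forall>m i. [coeff (F (Suc m)) i = coeff (F m) i] (mod int p ^ m)) \<and>
     (\<exists>d. \<forall>m. degree (F m) \<le> d)"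

definition padic_zero :: "nat \<Rightarrow> (nat \<Rightarrow> int) \<Rightarrow> bool" where
  "padic_zero p x \<longleftrightarrow> (\<forall>m. [x m = 0] (mod int p ^ m))"

text \<open>Degree of the p-adic polynomial: least d such that all coefficients of
  index > d vanish in Z_p (the zero polynomial gets 0 here instead of -infinity;
  this is harmless).\<close>
definition padic_poly_deg :: "nat \<Rightarrow> (nat \<Rightarrow> int poly) \<Rightarrow> nat" where
  "padic_poly_deg p F = (LEAST d. \<forall>i>d. padic_zero p (\<lambda>m. coeff (F m) i))"

text \<open>ord_p(x) \<ge> B for the p-adic integer with approximations x, B an integer:
  x is divisible by p^B in Z_p (vacuous for B \<le> 0), i.e. x m == 0 mod p^B for all m \<ge> B.\<close>
definition padic_ord_ge :: "nat \<Rightarrow> (nat \<Rightarrow> int) \<Rightarrow> int \<Rightarrow> bool" where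
  "padic_ord_ge p x B \<longleftrightarrow> (\<forall>m\<ge>nat B. [x m = 0] (mod int p ^ nat B))"

text \<open>Number of carries when adding a and b in base p, via ord_p of binomial(a+b, a).\<close>
definition carries :: "nat \<Rightarrow> nat \<Rightarrow> nat \<Rightarrow> nat" where
  "carries p a b = multiplicity p ((a + b) choose a)"

text \<open>floor(n / p^(alpha-1)), with the convention floor(n/p^(-1)) = p n.\<close>
definition floor_div_pow :: "nat \<Rightarrow> nat \<Rightarrow> nat \<Rightarrow> nat" where
  "floor_div_pow p \<alpha> n = (if \<alpha> = 0 then p * n else n div p ^ (\<alpha> - 1))"

text \<open>{a}_{p^(alpha-1)}: least nonnegative residue; equals 0 when alpha = 0.\<close>
definition frac_mod :: "nat \<Rightarrow> nat \<Rightarrow> int \<Rightarrow> nat" where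
  "frac_mod p \<alpha> a = (if \<alpha> = 0 then 0 else nat (a mod int p ^ (\<alpha> - 1)))"

definition binom_sum_approx :: "nat \<Rightarrow> (nat \<Rightarrow> int poly) \<Rightarrow> nat \<Rightarrow> nat \<Rightarrow> int \<Rightarrow> nat \<Rightarrow> int" where
  "binom_sum_approx p F \<alpha> n r m =
     (\<Sum>k\<in>{k\<in>{0..int n}. [k = r] (mod int p ^ \<alpha>)}.
        of_nat (n choose nat k) * (-1) ^ nat k * poly (F m) ((k - r) div int p ^ \<alpha>))"

end

theory Submission
  imports Defs
begin

text \<open>Write \<open>S\<^sub>q(n, r, h)\<close>, i.e. \<open>cong_binom_sum q n r h\<close>, for the sum of
  \<open>(n choose k) (-1)^k h((k - r) / q)\<close> over all \<open>k \<equiv> r (mod q)\<close>. For \<open>q = p\<close> Fleck's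
  congruence gives \<open>p^ord\<^sub>p(n!) dvd S\<^sub>p(n, r, 1)\<close>, and the identity
  \<open>q S\<^sub>q(n, r, x h) = - n S\<^sub>q(n - 1, r - 1, h) - r S\<^sub>q(n, r, h)\<close> extends this to polynomials \<open>h\<close>
  at the cost of one factor \<open>p\<close> per degree; \<open>q = 1\<close> is handled in the same way.
  For \<open>q = p M\<close>, writing \<open>k = t + p j\<close> with \<open>t = r mod p\<close> and expanding the resulting
  function of \<open>j\<close> by Newton interpolation gives
  \<open>S\<^bsub>p M\<^esub>(n, r, f) = \<Sum>\<^sub>i (-1)^i S\<^sub>M(i, r div p, f) S\<^sub>p(n, t, \<lambda>x. x choose i)\<close>,
  whose last factor is divisible by \<open>p^(ord\<^sub>p(n!) - ord\<^sub>p((p i)!))\<close>. Induction on \<open>\<alpha>\<close>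
  with \<open>M = p^\<alpha>\<close> reduces the theorem to an inequality between exponents; expressing the
  carries through the truncated Legendre sums \<open>\<lfloor>x / p\<rfloor> + \<dots> + \<lfloor>x / p^b\<rfloor>\<close> turns it into
  monotonicity of these sums. The \<open>p\<close>-adic statement follows by cutting each approximation
  \<open>F m\<close> off above the degree, since the discarded coefficients vanish modulo \<open>p^m\<close>.\<close>

section \<open>Legendre's formula and carries\<close>

definition fact_multiplicity :: "nat \<Rightarrow> nat \<Rightarrow> nat" where
  "fact_multiplicity p n = multiplicity p (fact n :: nat)"

lemma fact_multiplicity_0 [simp]: "fact_multiplicity p 0 = 0"
  by (simp add: fact_multiplicity_def)

lemma fact_multiplicity_Suc:
  assumes "prime p"
  shows "fact_multiplicity p (Suc n) = fact_multiplicity p n + multiplicity p (Suc n)"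
proof -
  have "(fact (Suc n) :: nat) = Suc n * fact n" by simp
  then show ?thesis
    using assms prime_elem_multiplicity_mult_distrib[of p "Suc n" "fact n :: nat"]
    by (simp add: fact_multiplicity_def prime_imp_prime_elem)
qed

lemma fact_multiplicity_mult_add:
  assumes "prime p" "c < p"
  shows "fact_multiplicity p (p * x + c) = x + fact_multiplicity p x"
proof -
  have low: "fact_multiplicity p (p * y + c) = fact_multiplicity p (p * y)" if "c < p" for y c
    using that
  proof (induction c)
    case (Suc c)
    then have "\<not> p dvd Suc (p * y + c)"
      by (metis add_Suc_right dvd_add_right_iff dvd_imp_le dvd_triv_left zero_less_Suc not_le)
    then show ?case
      using Suc fact_multiplicity_Suc[OF assms(1), of "p * y + c"] by (simp add: not_dvd_imp_multiplicity_0)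
  qed simp
  have "fact_multiplicity p (p * x) = x + fact_multiplicity p x"
  proof (induction x)
    case (Suc x)
    have p1: "p > 1" using assms(1) prime_gt_1_nat by blast
    then have "p * Suc x = Suc (p * x + (p - 1))" by simp
    then have "fact_multiplicity p (p * Suc x)
        = fact_multiplicity p (p * x + (p - 1)) + multiplicity p (p * Suc x)"
      using fact_multiplicity_Suc[OF assms(1), of "p * x + (p - 1)"] by (simp only:)
    moreover have "multiplicity p (p * Suc x) = Suc (multiplicity p (Suc x))"
      using p1 by (intro multiplicity_times_same) auto
    ultimately show ?case
      using Suc low[of "p - 1" x] p1 fact_multiplicity_Suc[OF assms(1), of x] by simp
  qed simp
  then show ?thesis using low[OF assms(2)] by simp
qed

lemma fact_multiplicity_div:
  assumes "prime p"
  shows "fact_multiplicity p n = n div p + fact_multiplicity p (n div p)"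
  using fact_multiplicity_mult_add[OF assms, of "n mod p" "n div p"] assms prime_gt_0_nat
  by simp

lemma fact_multiplicity_less:
  assumes "prime p" "x < p"
  shows "fact_multiplicity p x = 0"
  using fact_multiplicity_mult_add[OF assms, of 0] by simp

lemma fact_multiplicity_le:
  assumes "prime p" "n \<ge> 1"
  shows "(p - 1) * fact_multiplicity p n \<le> n - 1"
  using assms(2)
proof (induction n rule: less_induct)
  case (less n)
  show ?case
  proof (cases "n div p = 0")
    case True
    then show ?thesis using fact_multiplicity_div[OF assms(1), of n] by simp
  next
    case False
    have p1: "p > 1" using assms(1) prime_gt_1_nat by blast
    then have "(p - 1) * fact_multiplicity p (n div p) \<le> n div p - 1"
      using less False by simp
    then have "(p - 1) * fact_multiplicity p n \<le> (p - 1) * (n div p) + (n div p - 1)"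
      using fact_multiplicity_div[OF assms(1), of n] by (simp add: algebra_simps)
    also have "\<dots> = p * (n div p) - 1"
      using False p1 by (simp add: algebra_simps diff_mult_distrib)
    also have "\<dots> \<le> n - 1"
      using times_div_less_eq_dividend[of p n] by linarith
    finally show ?thesis .
  qed
qed

lemma carries_fact_multiplicity:
  assumes "prime p"
  shows "carries p a b + fact_multiplicity p a + fact_multiplicity p b = fact_multiplicity p (a + b)"
proof -
  have "fact (a + b) = (fact a * fact b * ((a + b) choose a) :: nat)"
    using binomial_fact_lemma[of a "a + b"] by simp
  then show ?thesis
    using assms by (simp add: carries_def fact_multiplicity_def prime_elem_multiplicity_mult_distrib)
qed

definition legendre_sum :: "nat \<Rightarrow> nat \<Rightarrow> int \<Rightarrow> int" where
  "legendre_sum p b x = (\<Sum>k=1..b. x div int p ^ k)"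

lemma legendre_sum_Suc:
  "legendre_sum p (Suc b) x = x div int p + legendre_sum p b (x div int p)"
proof -
  have "legendre_sum p (Suc b) x = x div int p + (\<Sum>k = Suc 1..Suc b. x div int p ^ k)"
    unfolding legendre_sum_def by (simp add: sum.atLeast_Suc_atMost)
  also have "(\<Sum>k = Suc 1..Suc b. x div int p ^ k) = legendre_sum p b (x div int p)"
    unfolding sum.shift_bounds_cl_Suc_ivl legendre_sum_def by (simp add: zdiv_zmult2_eq)
  finally show ?thesis .
qed

lemma fact_multiplicity_legendre_sum:
  assumes "prime p"
  shows "int (fact_multiplicity p n) = legendre_sum p b (int n) + int (fact_multiplicity p (n div p ^ b))"
proof (induction b arbitrary: n)
  case 0
  then show ?case by (simp add: legendre_sum_def)
next
  case (Suc b)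
  have "n div p div p ^ b = n div p ^ Suc b"
    by (simp add: div_mult2_eq)
  then show ?case
    using fact_multiplicity_div[OF assms, of n] Suc[of "n div p"]
    by (simp add: legendre_sum_Suc zdiv_int)
qed

lemma fact_multiplicity_eq_legendre_sum:
  assumes "prime p" "x < p * p ^ b"
  shows "int (fact_multiplicity p x) = legendre_sum p b (int x)"
proof -
  have "x div p ^ b < p"
    using assms by (simp add: div_less_iff_less_mult mult.commute prime_gt_0_nat)
  then show ?thesis
    using fact_multiplicity_legendre_sum[OF assms(1), of x b] fact_multiplicity_less[OF assms(1)]
    by simp
qed

lemma legendre_sum_add_mult_pow:
  "legendre_sum p b (x + j * int p ^ b) = legendre_sum p b x + j * legendre_sum p b (int p ^ b)"
proof -
  have "(x + j * int p ^ b) div int p ^ k = x div int p ^ k + j * (int p ^ b div int p ^ k)"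
    if "k \<in> {1..b}" for k
  proof -
    have pb: "int p ^ b = int p ^ (b - k) * int p ^ k"
      using that by (simp flip: power_add)
    show ?thesis
    proof (cases "p = 0")
      case False
      have "(x + j * int p ^ b) div int p ^ k = (x + (j * int p ^ (b - k)) * int p ^ k) div int p ^ k"
        by (simp add: pb ac_simps)
      also have "\<dots> = x div int p ^ k + j * int p ^ (b - k)"
        using False by simp
      finally show ?thesis
        using False by (simp add: pb)
    qed (use that in \<open>simp add: power_0_left\<close>)
  qed
  then show ?thesis
    unfolding legendre_sum_def by (simp add: sum.distrib sum_distrib_left)
qed

lemma legendre_sum_mono:
  "0 < p \<Longrightarrow> x \<le> y \<Longrightarrow> legendre_sum p b x \<le> legendre_sum p b y"
  unfolding legendre_sum_def by (intro sum_mono zdiv_mono1) auto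

lemma carries_legendre_sum:
  assumes "prime p" "0 \<le> a" "a < int p ^ b" "0 \<le> c" "c < int p ^ b"
  shows "int (carries p (nat a) (nat c))
           = legendre_sum p b (a + c) - legendre_sum p b a - legendre_sum p b c"
proof -
  have small: "int (fact_multiplicity p x) = legendre_sum p b (int x)" if "int x < 2 * int p ^ b" for x
  proof (rule fact_multiplicity_eq_legendre_sum[OF assms(1)])
    have "2 * int p ^ b \<le> int p * int p ^ b"
      using prime_ge_2_nat[OF assms(1)] by simp
    then have "int x < int (p * p ^ b)"
      using that unfolding of_nat_mult of_nat_power by linarith
    then show "x < p * p ^ b"
      by (simp only: of_nat_less_iff)
  qed
  have "int (carries p (nat a) (nat c)) + int (fact_multiplicity p (nat a))
      + int (fact_multiplicity p (nat c)) = int (fact_multiplicity p (nat a + nat c))"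
    using carries_fact_multiplicity[OF assms(1), of "nat a" "nat c"] by (metis of_nat_add)
  then show ?thesis
    using small[of "nat a"] small[of "nat c"] small[of "nat a + nat c"] assms(2-5) by simp
qed

text \<open>The bound of the theorem before subtracting \<open>deg f\<close>.\<close>

definition fleck_exponent :: "nat \<Rightarrow> nat \<Rightarrow> nat \<Rightarrow> int \<Rightarrow> nat" where
  "fleck_exponent p \<alpha> n r = fact_multiplicity p (floor_div_pow p \<alpha> n)
     + carries p (frac_mod p \<alpha> r) (frac_mod p \<alpha> (int n - r))"

lemma fleck_exponent_0: "fleck_exponent p 0 n r = fact_multiplicity p (p * n)"
  by (simp add: fleck_exponent_def floor_div_pow_def frac_mod_def carries_def)

lemma fleck_exponent_1: "fleck_exponent p 1 n r = fact_multiplicity p n"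
  by (simp add: fleck_exponent_def floor_div_pow_def frac_mod_def carries_def)

lemma fleck_exponent_legendre_sum:
  assumes "prime p"
  shows "int (fleck_exponent p (Suc b) n r)
           = int (fact_multiplicity p n) - legendre_sum p b r - legendre_sum p b (int n - r)"
proof -
  define Q where "Q = int p ^ b"
  have "Q > 0"
    unfolding Q_def using assms prime_gt_0_nat by simp
  define a c where "a = r mod Q" and "c = (int n - r) mod Q"
  have "r = a + (r div Q) * Q" "int n - r = c + ((int n - r) div Q) * Q"
    "int n = (a + c) + (r div Q + (int n - r) div Q) * Q"
    unfolding a_def c_def by (simp_all add: algebra_simps)
  then have "legendre_sum p b r = legendre_sum p b a + (r div Q) * legendre_sum p b Q"
    "legendre_sum p b (int n - r) = legendre_sum p b c + ((int n - r) div Q) * legendre_sum p b Q"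
    "legendre_sum p b (int n)
       = legendre_sum p b (a + c) + (r div Q + (int n - r) div Q) * legendre_sum p b Q"
    unfolding Q_def by (metis legendre_sum_add_mult_pow)+
  moreover have "int (carries p (nat a) (nat c))
      = legendre_sum p b (a + c) - legendre_sum p b a - legendre_sum p b c"
    using \<open>Q > 0\<close> unfolding a_def c_def Q_def by (intro carries_legendre_sum[OF assms]) simp_all
  moreover have "int (fact_multiplicity p (n div p ^ b))
      = int (fact_multiplicity p n) - legendre_sum p b (int n)"
    using fact_multiplicity_legendre_sum[OF assms, of n b] by simp
  moreover have "fleck_exponent p (Suc b) n r
      = fact_multiplicity p (n div p ^ b) + carries p (nat a) (nat c)"
    unfolding fleck_exponent_def floor_div_pow_def frac_mod_def a_def c_def Q_def by simp
  ultimately show ?thesis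
    by (simp add: algebra_simps)
qed

lemma fleck_exponent_Suc_le:
  assumes "prime p" and i: "int i \<le> (int n - r mod int p) div int p"
  shows "fleck_exponent p (Suc (Suc b)) n r + fact_multiplicity p (p * i)
           \<le> fleck_exponent p (Suc b) i (r div int p) + fact_multiplicity p n"
proof -
  define s m where "s = r div int p" and "m = (int n - r mod int p) div int p"
  have p0: "0 < p" using assms(1) prime_gt_0_nat by blast
  have "int n - r = (int n - r mod int p) + (- s) * int p"
    unfolding s_def by (simp add: algebra_simps minus_mod_eq_mult_div)
  also have "\<dots> div int p = m - s"
    unfolding m_def using p0 by (simp only: div_mult_self1 of_nat_eq_0_iff)
  finally have nr: "(int n - r) div int p = m - s" .
  have "legendre_sum p b (int i - s) + int i \<le> legendre_sum p b (m - s) + m"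
    using legendre_sum_mono[OF p0, of "int i - s" "m - s" b] i unfolding m_def by linarith
  then show ?thesis
    using fleck_exponent_legendre_sum[OF assms(1), of "Suc b" n r]
      fleck_exponent_legendre_sum[OF assms(1), of b i s]
      fact_multiplicity_mult_add[OF assms(1) p0, of i]
    by (simp add: legendre_sum_Suc nr flip: s_def)
qed

section \<open>Alternating binomial sums over a residue class\<close>

definition cong_binom_term :: "int \<Rightarrow> nat \<Rightarrow> int \<Rightarrow> (int \<Rightarrow> int) \<Rightarrow> nat \<Rightarrow> int" where
  "cong_binom_term q n r h k =
     (if q dvd int k - r then int (n choose k) * (-1) ^ k * h ((int k - r) div q) else 0)"

definition cong_binom_sum :: "int \<Rightarrow> nat \<Rightarrow> int \<Rightarrow> (int \<Rightarrow> int) \<Rightarrow> int" where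
  "cong_binom_sum q n r h = (\<Sum>k\<le>n. cong_binom_term q n r h k)"

lemma cong_binom_sum_atMost:
  "n \<le> N \<Longrightarrow> cong_binom_sum q n r h = (\<Sum>k\<le>N. cong_binom_term q n r h k)"
  unfolding cong_binom_sum_def
  by (rule sum.mono_neutral_left) (auto simp: cong_binom_term_def)

lemma cong_binom_sum_add:
  "cong_binom_sum q n r (\<lambda>x. g x + h x) = cong_binom_sum q n r g + cong_binom_sum q n r h"
  unfolding cong_binom_sum_def cong_binom_term_def sum.distrib[symmetric]
  by (rule sum.cong) (simp_all add: algebra_simps)

lemma cong_binom_sum_cmult:
  "cong_binom_sum q n r (\<lambda>x. c * h x) = c * cong_binom_sum q n r h"
  unfolding cong_binom_sum_def cong_binom_term_def sum_distrib_left
  by (rule sum.cong) (simp_all add: ac_simps)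

lemma cong_binom_sum_sum:
  "cong_binom_sum q n r (\<lambda>x. \<Sum>i\<in>I. g i x) = (\<Sum>i\<in>I. cong_binom_sum q n r (g i))"
proof -
  have "cong_binom_term q n r (\<lambda>x. \<Sum>i\<in>I. g i x) k = (\<Sum>i\<in>I. cong_binom_term q n r (g i) k)" for k
    unfolding cong_binom_term_def by (simp add: sum_distrib_left)
  then show ?thesis
    unfolding cong_binom_sum_def by (simp add: sum.swap[of _ I])
qed

lemma dvd_cong_binom_sum:
  "(\<And>x. c dvd h x) \<Longrightarrow> c dvd cong_binom_sum q n r h"
  unfolding cong_binom_sum_def cong_binom_term_def by (auto intro!: dvd_sum)

lemma cong_binom_sum_zero [simp]: "cong_binom_sum q n r (\<lambda>_. 0) = 0"
  unfolding cong_binom_sum_def cong_binom_term_def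
  by (simp only: mult_zero_right if_cancel sum.neutral_const)

lemma dvd_cong_binom_sum_poly:
  "(\<And>i. c dvd coeff f i) \<Longrightarrow> c dvd cong_binom_sum q n r (poly f)"
  unfolding poly_altdef by (intro dvd_cong_binom_sum dvd_sum dvd_mult2)

lemma cong_binom_sum_cong:
  assumes "0 \<le> r" "r < q" and eq: "\<And>x. 0 \<le> x \<Longrightarrow> r + q * x \<le> int n \<Longrightarrow> g x = h x"
  shows "cong_binom_sum q n r g = cong_binom_sum q n r h"
  unfolding cong_binom_sum_def cong_binom_term_def
proof (intro sum.cong refl if_cong)
  fix k assume k: "k \<in> {..n}" and "q dvd int k - r"
  then obtain x where x: "int k - r = q * x" by (elim dvdE)
  have "0 \<le> x"
  proof (rule ccontr)
    assume "\<not> 0 \<le> x"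
    then have "q * x \<le> q * (- 1)"
      using assms(1,2) by (intro mult_left_mono) simp_all
    then show False using x assms(2) of_nat_0_le_iff[of k] by linarith
  qed
  moreover have "r + q * x \<le> int n" using x k by simp
  ultimately show "int (n choose k) * (-1) ^ k * g ((int k - r) div q)
      = int (n choose k) * (-1) ^ k * h ((int k - r) div q)"
    using x assms eq by simp
qed

lemma cong_binom_term_Suc:
  "cong_binom_term q (Suc n) r h k
     = cong_binom_term q n r h k + (if k = 0 then 0 else - cong_binom_term q n (r - 1) h (k - 1))"
proof (cases k)
  case (Suc j)
  then have "int k - r = int j - (r - 1)"
    by simp
  then show ?thesis
    unfolding cong_binom_term_def using Suc by (simp add: algebra_simps)
qed (simp add: cong_binom_term_def)

lemma cong_binom_sum_Suc:
  "cong_binom_sum q (Suc n) r h = cong_binom_sum q n r h - cong_binom_sum q n (r - 1) h"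
proof -
  have "cong_binom_sum q (Suc n) r h
      = (\<Sum>k\<le>Suc n. cong_binom_term q n r h k)
        + (\<Sum>k\<le>Suc n. if k = 0 then 0 else - cong_binom_term q n (r - 1) h (k - 1))"
    unfolding cong_binom_sum_def cong_binom_term_Suc sum.distrib ..
  also have "(\<Sum>k\<le>Suc n. cong_binom_term q n r h k) = cong_binom_sum q n r h"
    by (rule cong_binom_sum_atMost[symmetric]) simp
  also have "(\<Sum>k\<le>Suc n. if k = 0 then 0 else - cong_binom_term q n (r - 1) h (k - 1))
      = - cong_binom_sum q n (r - 1) h"
    unfolding sum.atMost_Suc_shift cong_binom_sum_def by (simp add: sum_negf)
  finally show ?thesis
    by simp
qed

lemma alternating_binomial_sum_Suc:
  fixes g :: "int \<Rightarrow> 'a::comm_ring_1"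
  shows "(\<Sum>i\<le>Suc j. of_nat (Suc j choose i) * (-1) ^ i * g (r - int i))
    = (\<Sum>i\<le>j. of_nat (j choose i) * (-1) ^ i * g (r - int i))
      - (\<Sum>i\<le>j. of_nat (j choose i) * (-1) ^ i * g (r - 1 - int i))"
proof -
  have shift: "r - int (Suc i) = r - 1 - int i" for i by simp
  have pascal: "of_nat (Suc j choose Suc i) * (-1) ^ Suc i * g (r - 1 - int i)
      = - (of_nat (j choose i) * (-1) ^ i * g (r - 1 - int i))
        - of_nat (j choose Suc i) * (-1) ^ i * g (r - 1 - int i)" for i
    by (simp add: algebra_simps)
  have "(\<Sum>i\<le>Suc j. of_nat (Suc j choose i) * (-1) ^ i * g (r - int i))
      = g r - (\<Sum>i\<le>j. of_nat (j choose i) * (-1) ^ i * g (r - 1 - int i))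
        - (\<Sum>i\<le>j. of_nat (j choose Suc i) * (-1) ^ i * g (r - 1 - int i))"
    unfolding sum.atMost_Suc_shift shift pascal sum_subtractf sum_negf by simp
  moreover have "(\<Sum>i\<le>j. of_nat (j choose i) * (-1) ^ i * g (r - int i))
      = g r - (\<Sum>i\<le>j. of_nat (j choose Suc i) * (-1) ^ i * g (r - 1 - int i))"
  proof -
    have "(\<Sum>i\<le>j. of_nat (j choose i) * (-1) ^ i * g (r - int i))
        = (\<Sum>i\<le>Suc j. of_nat (j choose i) * (-1) ^ i * g (r - int i))"
      by (simp add: binomial_eq_0)
    also have "\<dots> = g r - (\<Sum>i\<le>j. of_nat (j choose Suc i) * (-1) ^ i * g (r - 1 - int i))"
      unfolding sum.atMost_Suc_shift shift by (simp add: sum_negf)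
    finally show ?thesis .
  qed
  ultimately show ?thesis by simp
qed

lemma cong_binom_sum_add_length:
  "cong_binom_sum q (m + j) r h = (\<Sum>i\<le>j. int (j choose i) * (-1) ^ i * cong_binom_sum q m (r - int i) h)"
proof (induction j arbitrary: r)
  case (Suc j)
  have "cong_binom_sum q (m + Suc j) r h = cong_binom_sum q (m + j) r h - cong_binom_sum q (m + j) (r - 1) h"
    by (simp add: cong_binom_sum_Suc)
  then show ?case
    using Suc.IH[of r] Suc.IH[of "r - 1"]
      alternating_binomial_sum_Suc[of j "\<lambda>x. cong_binom_sum q m x h" r] by simp
qed simp

lemma cong_binom_term_times_id:
  assumes "q \<noteq> 0"
  shows "q * cong_binom_term q n r (\<lambda>x. x * h x) k
           = (if k = 0 then 0 else - (int n * cong_binom_term q (n - 1) (r - 1) h (k - 1)))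
             - r * cong_binom_term q n r h k"
proof (cases k)
  case 0
  show ?thesis
  proof (cases "q dvd r")
    case True
    then have "q * (- r div q) = - r"
      by simp
    then show ?thesis
      using True 0 unfolding cong_binom_term_def by (simp add: mult.assoc[symmetric])
  qed (simp add: cong_binom_term_def 0)
next
  case (Suc j)
  have shift: "int (k - 1) - (r - 1) = int k - r"
    using Suc by simp
  have choose: "int k * int (n choose k) = int n * int ((n - 1) choose (k - 1))"
    using times_binomial_minus1_eq[of k n] Suc by (metis of_nat_mult zero_less_Suc)
  show ?thesis
  proof (cases "q dvd int k - r")
    case True
    define x where "x = (int k - r) div q"
    have qx: "q * x = int k - r"
      unfolding x_def using True by simp
    have "q * cong_binom_term q n r (\<lambda>x. x * h x) k = int (n choose k) * (-1) ^ k * (q * x) * h x"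
      using True unfolding cong_binom_term_def x_def[symmetric] by (simp add: ac_simps)
    also have "\<dots> = int k * int (n choose k) * (-1) ^ k * h x - r * cong_binom_term q n r h k"
      unfolding qx using True unfolding cong_binom_term_def x_def[symmetric] by (simp add: algebra_simps)
    finally show ?thesis
      using True Suc unfolding choose cong_binom_term_def x_def shift by simp
  next
    case False
    then show ?thesis
      unfolding cong_binom_term_def shift by simp
  qed
qed

lemma cong_binom_sum_times_id:
  assumes "q \<noteq> 0"
  shows "q * cong_binom_sum q n r (\<lambda>x. x * h x)
           = - (int n * cong_binom_sum q (n - 1) (r - 1) h) - r * cong_binom_sum q n r h"
proof -
  have "q * cong_binom_sum q n r (\<lambda>x. x * h x)
      = (\<Sum>k\<le>n. if k = 0 then 0 else - (int n * cong_binom_term q (n - 1) (r - 1) h (k - 1)))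
        - r * cong_binom_sum q n r h"
    unfolding cong_binom_sum_def sum_distrib_left cong_binom_term_times_id[OF assms] sum_subtractf ..
  also have "(\<Sum>k\<le>n. if k = 0 then 0 else - (int n * cong_binom_term q (n - 1) (r - 1) h (k - 1)))
      = - (int n * cong_binom_sum q (n - 1) (r - 1) h)"
  proof (cases n)
    case (Suc m)
    show ?thesis
      unfolding Suc sum.atMost_Suc_shift cong_binom_sum_def by (simp add: sum_negf sum_distrib_left)
  qed simp
  finally show ?thesis .
qed

lemma cong_binom_sum_1_const: "cong_binom_sum 1 n r (\<lambda>_. 1) = (if n = 0 then 1 else 0)"
proof -
  have "cong_binom_sum 1 n r (\<lambda>_. 1) = (\<Sum>k\<le>n. (-1) ^ k * int (n choose k))"
    unfolding cong_binom_sum_def cong_binom_term_def by (simp add: ac_simps)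
  then show ?thesis
    using choose_alternating_sum[of n] by (cases "n = 0") auto
qed

lemma sum_cong_binom_sum_residues:
  assumes "0 < p" "0 < m"
  shows "(\<Sum>i<p. cong_binom_sum (int p) m (r - int i) (\<lambda>_. 1)) = 0"
proof -
  have one: "(\<Sum>i<p. if int p dvd int k - (r - int i) then 1 else 0) = (1::int)" for k
  proof -
    define i0 where "i0 = nat ((r - int k) mod int p)"
    have "i0 < p"
      unfolding i0_def using assms(1) by (simp add: nat_less_iff)
    have "int p dvd int k - (r - int i) \<longleftrightarrow> i = i0" if "i < p" for i
    proof -
      have "int p dvd int k - (r - int i) \<longleftrightarrow> [int i = r - int k] (mod int p)"
        by (simp add: cong_iff_dvd_diff algebra_simps dvd_diff_commute)
      also have "\<dots> \<longleftrightarrow> int i = (r - int k) mod int p"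
        using that by (simp add: cong_def)
      also have "\<dots> \<longleftrightarrow> i = i0"
        unfolding i0_def using assms(1) by auto
      finally show ?thesis .
    qed
    then have "(\<Sum>i<p. if int p dvd int k - (r - int i) then 1 else 0) = (\<Sum>i<p. if i = i0 then 1 else (0::int))"
      by (intro sum.cong) auto
    then show ?thesis
      using \<open>i0 < p\<close> by simp
  qed
  have "(\<Sum>i<p. cong_binom_sum (int p) m (r - int i) (\<lambda>_. 1))
      = (\<Sum>k\<le>m. int (m choose k) * (-1) ^ k * (\<Sum>i<p. if int p dvd int k - (r - int i) then 1 else 0))"
    unfolding cong_binom_sum_def cong_binom_term_def
    by (subst sum.swap) (simp add: sum_distrib_left if_distrib cong: if_cong)
  also have "\<dots> = (\<Sum>k\<le>m. (-1) ^ k * int (m choose k))"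
    unfolding one by (simp add: ac_simps)
  also have "\<dots> = 0"
    using choose_alternating_sum[OF assms(2)] by simp
  finally show ?thesis .
qed

section \<open>Fleck's congruence with polynomial weights\<close>

lemma prime_choose_pred_cong:
  assumes "prime p" "i \<le> p - 1"
  shows "[int (p - 1 choose i) * (-1) ^ i = 1] (mod int p)"
  using assms(2)
proof (induction i)
  case (Suc i)
  have p1: "p > 1"
    using assms(1) prime_gt_1_nat by blast
  have "p dvd (p choose Suc i)"
    using Suc.prems p1 assms(1) by (intro dvd_choose_prime) auto
  then have zero: "[(-1) ^ i * int (p choose Suc i) = 0] (mod int p)"
    by (simp add: cong_0_iff)
  have "p choose Suc i = (p - 1 choose i) + (p - 1 choose Suc i)"
    using binomial_Suc_Suc[of "p - 1" i] p1 by simp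
  then have eq: "int (p - 1 choose Suc i) * (-1) ^ Suc i
      = int (p - 1 choose i) * (-1) ^ i - (-1) ^ i * int (p choose Suc i)"
    by (simp add: algebra_simps)
  have IH: "[int (p - 1 choose i) * (-1) ^ i = 1] (mod int p)"
    using Suc by simp
  show ?case
    unfolding eq using cong_diff[OF IH zero] by simp
qed simp

lemma cong_binom_sum_add_pred:
  assumes "0 < p" "0 < m"
  shows "cong_binom_sum (int p) (m + (p - 1)) r (\<lambda>_. 1)
           = (\<Sum>i\<le>p - 1. (int (p - 1 choose i) * (-1) ^ i - 1) * cong_binom_sum (int p) m (r - int i) (\<lambda>_. 1))"
proof -
  have "cong_binom_sum (int p) (m + (p - 1)) r (\<lambda>_. 1)
      = (\<Sum>i\<le>p - 1. (int (p - 1 choose i) * (-1) ^ i - 1) * cong_binom_sum (int p) m (r - int i) (\<lambda>_. 1))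
        + (\<Sum>i\<le>p - 1. cong_binom_sum (int p) m (r - int i) (\<lambda>_. 1))"
    by (simp add: cong_binom_sum_add_length sum.distrib[symmetric] algebra_simps)
  moreover have "{..p - 1} = {..<p}"
    using assms(1) by auto
  ultimately show ?thesis
    using sum_cong_binom_sum_residues[OF assms, of r] by simp
qed

text \<open>By \<open>prime_choose_pred_cong\<close> every coefficient in \<open>cong_binom_sum_add_pred\<close> is divisible
  by \<open>p\<close>, so each step \<open>n \<mapsto> n + (p - 1)\<close> gains a factor \<open>p\<close>.\<close>

theorem fleck_congruence:
  assumes "prime p" "1 \<le> n"
  shows "int p ^ ((n - 1) div (p - 1)) dvd cong_binom_sum (int p) n r (\<lambda>_. 1)"
  using assms(2)
proof (induction n arbitrary: r rule: less_induct)
  case (less n)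
  have p1: "p > 1"
    using assms(1) prime_gt_1_nat by blast
  show ?case
  proof (cases "n < p")
    case True
    then have "(n - 1) div (p - 1) = 0"
      using p1 by (intro div_less) linarith
    then show ?thesis
      by simp
  next
    case False
    define m where "m = n - (p - 1)"
    have m: "1 \<le> m" "m < n" "n = m + (p - 1)"
      unfolding m_def using False p1 by auto
    have exp: "(n - 1) div (p - 1) = (m - 1) div (p - 1) + 1"
      using m p1 div_add_self2[of "p - 1" "m - 1"] by (simp add: Suc_diff_le)
    have sum: "cong_binom_sum (int p) n r (\<lambda>_. 1) = (\<Sum>i\<le>p - 1.
        (int (p - 1 choose i) * (-1) ^ i - 1) * cong_binom_sum (int p) m (r - int i) (\<lambda>_. 1))"
      unfolding m(3) using p1 m(1) by (intro cong_binom_sum_add_pred) simp_all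
    have "int p ^ ((n - 1) div (p - 1))
        dvd (int (p - 1 choose i) * (-1) ^ i - 1) * cong_binom_sum (int p) m (r - int i) (\<lambda>_. 1)"
      if "i \<le> p - 1" for i
      using mult_dvd_mono[OF prime_choose_pred_cong[OF assms(1) that, unfolded cong_iff_dvd_diff]
          less.IH[OF m(2,1), of "r - int i"]]
      unfolding exp by (simp add: power_add ac_simps)
    then show ?thesis
      unfolding sum by (intro dvd_sum) auto
  qed
qed

lemma cong_binom_sum_pCons:
  assumes "q * u = c" "q \<noteq> 0"
  shows "c * cong_binom_sum q n r (poly (pCons a g))
           = a * c * cong_binom_sum q n r (\<lambda>_. 1)
             - u * int n * cong_binom_sum q (n - 1) (r - 1) (poly g) - u * r * cong_binom_sum q n r (poly g)"
proof -
  have "poly (pCons a g) = (\<lambda>x. a * 1 + x * poly g x)"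
    by (simp add: fun_eq_iff)
  then have "cong_binom_sum q n r (poly (pCons a g))
      = a * cong_binom_sum q n r (\<lambda>_. 1) + cong_binom_sum q n r (\<lambda>x. x * poly g x)"
    by (simp only: cong_binom_sum_add cong_binom_sum_cmult)
  then have "c * cong_binom_sum q n r (poly (pCons a g))
      = a * c * cong_binom_sum q n r (\<lambda>_. 1) + u * (q * cong_binom_sum q n r (\<lambda>x. x * poly g x))"
    by (simp add: algebra_simps flip: assms(1))
  then show ?thesis
    by (simp add: cong_binom_sum_times_id[OF assms(2)] algebra_simps)
qed

lemma cong_binom_sum_poly_dvd:
  fixes c q u :: int and e :: "nat \<Rightarrow> nat" and f :: "int poly"
  assumes "q * u = c" "q \<noteq> 0"
    and const: "\<And>n r. c ^ e n dvd cong_binom_sum q n r (\<lambda>_. 1)"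
    and step: "\<And>n. 0 < n \<Longrightarrow> c ^ e n dvd u * int n * c ^ e (n - 1)"
    and "degree f \<le> d"
  shows "c ^ e n dvd c ^ d * cong_binom_sum q n r (poly f)"
  using \<open>degree f \<le> d\<close>
proof (induction d arbitrary: f n r)
  case 0
  then obtain a where "f = [:a:]"
    by (metis degree_0_id le_zero_eq)
  then have "poly f = (\<lambda>_. a * 1)"
    by auto
  then show ?case
    using const[of n r] by (simp only: cong_binom_sum_cmult) simp
next
  case (Suc d)
  obtain a g where f: "f = pCons a g"
    by (cases f)
  have deg_g: "degree g \<le> d"
    using Suc.prems unfolding f by (cases "g = 0") auto
  have shift: "c ^ e n dvd u * int n * (c ^ d * cong_binom_sum q (n - 1) (r - 1) (poly g))"
  proof (cases "n = 0")
    case False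
    then show ?thesis
      using dvd_trans[OF step mult_dvd_mono[OF dvd_refl Suc.IH[OF deg_g, of "n - 1" "r - 1"]]]
      by simp
  qed simp
  have "c ^ Suc d * cong_binom_sum q n r (poly f)
      = a * c ^ Suc d * cong_binom_sum q n r (\<lambda>_. 1)
        - u * int n * (c ^ d * cong_binom_sum q (n - 1) (r - 1) (poly g))
        - u * r * (c ^ d * cong_binom_sum q n r (poly g))"
    using arg_cong[OF cong_binom_sum_pCons[OF assms(1,2), of n r a g], of "(*) (c ^ d)"]
    unfolding f by (simp add: algebra_simps)
  then show ?case
    using shift const[of n r] Suc.IH[OF deg_g, of n r] by (simp add: dvd_diff)
qed

lemma cong_binom_sum_1_poly_dvd:
  assumes "prime p" "degree f \<le> d"
  shows "int p ^ fact_multiplicity p (p * n) dvd int p ^ d * cong_binom_sum 1 n r (poly f)"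
proof (rule cong_binom_sum_poly_dvd[OF _ _ _ _ assms(2)])
  show "int p ^ fact_multiplicity p (p * n) dvd cong_binom_sum 1 n r (\<lambda>_. 1)" for n r
    by (simp add: cong_binom_sum_1_const)
  show "int p ^ fact_multiplicity p (p * n) dvd int p * int n * int p ^ fact_multiplicity p (p * (n - 1))"
    if "0 < n" for n
  proof -
    have eq: "fact_multiplicity p (p * n) = Suc (multiplicity p n + fact_multiplicity p (p * (n - 1)))"
      using that fact_multiplicity_mult_add[OF assms(1) prime_gt_0_nat[OF assms(1)]]
        fact_multiplicity_Suc[OF assms(1), of "n - 1"] by simp
    have "int p ^ multiplicity p n dvd int n"
      by (metis multiplicity_dvd of_nat_dvd_iff of_nat_power)
    then show ?thesis
      unfolding eq power_Suc power_add mult.assoc by (intro mult_dvd_mono dvd_refl)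
  qed
qed simp_all

lemma cong_binom_sum_prime_poly_dvd:
  assumes "prime p" "degree f \<le> d"
  shows "int p ^ fact_multiplicity p n dvd int p ^ d * cong_binom_sum (int p) n r (poly f)"
proof (rule cong_binom_sum_poly_dvd[OF _ _ _ _ assms(2)])
  show "int p ^ fact_multiplicity p n dvd cong_binom_sum (int p) n r (\<lambda>_. 1)" for n r
  proof (cases "n = 0")
    case False
    have p1: "p > 1"
      using assms(1) prime_gt_1_nat by blast
    have "(p - 1) * fact_multiplicity p n \<le> n - 1"
      using fact_multiplicity_le[OF assms(1)] False by simp
    then have "fact_multiplicity p n \<le> (n - 1) div (p - 1)"
      using p1 by (simp add: less_eq_div_iff_mult_less_eq mult.commute)
    then show ?thesis
      using fleck_congruence[OF assms(1), of n r] False by (meson dvd_trans le_imp_power_dvd less_one not_le)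
  qed (simp add: cong_binom_sum_def cong_binom_term_def)
  show "int p ^ fact_multiplicity p n dvd 1 * int n * int p ^ fact_multiplicity p (n - 1)"
    if "0 < n" for n
  proof -
    have "fact_multiplicity p n = multiplicity p n + fact_multiplicity p (n - 1)"
      using that fact_multiplicity_Suc[OF assms(1), of "n - 1"] by simp
    moreover have "int p ^ multiplicity p n dvd int n"
      by (metis multiplicity_dvd of_nat_dvd_iff of_nat_power)
    ultimately show ?thesis
      by (simp add: power_add mult_dvd_mono)
  qed
qed (use assms(1) prime_gt_0_nat in simp_all)

section \<open>Prime power moduli\<close>

lemma alternating_sum_choose_mult_choose:
  "(\<Sum>i\<le>j. (-1) ^ i * of_nat (j choose i) * of_nat (i choose l))
     = (if l = j then (-1) ^ j else (0::'a::comm_ring_1))"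
proof (cases "l \<le> j")
  case False
  then show ?thesis
    by (intro trans[OF sum.neutral]) (auto simp: binomial_eq_0)
next
  case True
  have "(\<Sum>i\<le>j. (-1) ^ i * of_nat (j choose i) * of_nat (i choose l))
      = (\<Sum>i=l..j. (-1) ^ i * of_nat (j choose i) * (of_nat (i choose l) :: 'a))"
    by (rule sum.mono_neutral_right) (auto simp: binomial_eq_0)
  also have "\<dots> = (\<Sum>u=0..j-l. (-1) ^ (u + l) * of_nat (j choose (u + l)) * of_nat ((u + l) choose l))"
    using sum.shift_bounds_cl_nat_ivl[of _ 0 l "j - l"] True by simp
  also have "\<dots> = (-1) ^ l * of_nat (j choose l) * (\<Sum>u\<le>j-l. (-1) ^ u * of_nat ((j - l) choose u))"
    unfolding sum_distrib_left atLeast0AtMost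
  proof (intro sum.cong refl)
    fix u assume "u \<in> {..j - l}"
    then have "(j choose (u + l)) * ((u + l) choose l) = (j choose l) * ((j - l) choose u)"
      using choose_mult[of l "u + l" j] True by simp
    then have choose: "of_nat (j choose (u + l)) * of_nat ((u + l) choose l)
        = (of_nat (j choose l) * of_nat ((j - l) choose u) :: 'a)"
      by (metis of_nat_mult)
    have "(-1) ^ (u + l) * of_nat (j choose (u + l)) * of_nat ((u + l) choose l)
        = (-1) ^ u * (-1) ^ l * (of_nat (j choose (u + l)) * of_nat ((u + l) choose l) :: 'a)"
      by (simp add: power_add ac_simps)
    then show "(-1) ^ (u + l) * of_nat (j choose (u + l)) * of_nat ((u + l) choose l)
        = (-1) ^ l * of_nat (j choose l) * ((-1) ^ u * (of_nat ((j - l) choose u) :: 'a))"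
      unfolding choose by (simp add: ac_simps)
  qed
  also have "\<dots> = (if l = j then (-1) ^ j else 0)"
    using choose_alternating_sum[of "j - l", where 'a = 'a] True by (cases "l = j") simp_all
  finally show ?thesis .
qed

lemma newton_interpolation:
  fixes \<phi> :: "nat \<Rightarrow> 'a::comm_ring_1"
  shows "\<phi> j = (\<Sum>i\<le>j. of_nat (j choose i) * (-1) ^ i * (\<Sum>l\<le>i. of_nat (i choose l) * (-1) ^ l * \<phi> l))"
proof -
  have "(\<Sum>i\<le>j. of_nat (j choose i) * (-1) ^ i * (\<Sum>l\<le>i. of_nat (i choose l) * (-1) ^ l * \<phi> l))
      = (\<Sum>i\<le>j. \<Sum>l\<le>j. (-1) ^ l * \<phi> l * ((-1) ^ i * of_nat (j choose i) * of_nat (i choose l)))"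
  proof (intro sum.cong refl)
    fix i assume "i \<in> {..j}"
    then have "(\<Sum>l\<le>i. of_nat (i choose l) * (-1) ^ l * \<phi> l) = (\<Sum>l\<le>j. of_nat (i choose l) * (-1) ^ l * \<phi> l)"
      by (intro sum.mono_neutral_left) (auto simp: binomial_eq_0)
    then show "of_nat (j choose i) * (-1) ^ i * (\<Sum>l\<le>i. of_nat (i choose l) * (-1) ^ l * \<phi> l)
        = (\<Sum>l\<le>j. (-1) ^ l * \<phi> l * ((-1) ^ i * of_nat (j choose i) * of_nat (i choose l)))"
      by (simp add: sum_distrib_left ac_simps)
  qed
  also have "\<dots> = (\<Sum>l\<le>j. (-1) ^ l * \<phi> l * (if l = j then (-1) ^ j else 0))"
    by (subst sum.swap) (simp add: sum_distrib_left[symmetric] alternating_sum_choose_mult_choose)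
  also have "\<dots> = (\<Sum>l\<le>j. if l = j then \<phi> j else 0)"
    by (intro sum.cong refl) (simp add: power_add[symmetric] ac_simps)
  also have "\<dots> = \<phi> j"
    by simp
  finally show ?thesis ..
qed

lemma cong_binom_sum_mult_modulus_residue:
  assumes "q \<noteq> 0" "M \<noteq> 0"
  shows "cong_binom_sum (q * M) n r h
           = cong_binom_sum q n (r mod q)
               (\<lambda>x. if M dvd x - r div q then h ((x - r div q) div M) else 0)"
proof -
  define s t where "s = r div q" and "t = r mod q"
  have r: "r = t + q * s"
    unfolding s_def t_def by simp
  have "cong_binom_term (q * M) n r h k
      = cong_binom_term q n t (\<lambda>x. if M dvd x - s then h ((x - s) div M) else 0) k" for k
  proof (cases "q dvd int k - t")
    case True
    then obtain x where x: "int k - t = q * x"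
      by (elim dvdE)
    then have "int k - r = q * (x - s)"
      using r by (simp add: algebra_simps)
    then show ?thesis
      unfolding cong_binom_term_def using x assms by simp
  next
    case False
    have "\<not> q dvd int k - r"
    proof
      assume "q dvd int k - r"
      then have "q dvd (int k - r) + q * s"
        by simp
      then show False
        using False r by (simp add: algebra_simps)
    qed
    then have "\<not> q * M dvd int k - r"
      using dvd_mult_left by blast
    then show ?thesis
      unfolding cong_binom_term_def using False by simp
  qed
  then show ?thesis
    unfolding cong_binom_sum_def s_def t_def by simp
qed

lemma cong_binom_sum_mult_modulus:
  assumes "0 < q" "M \<noteq> 0"
  shows "cong_binom_sum (q * M) n r h
           = (\<Sum>i\<le>n. (-1) ^ i * cong_binom_sum M i (r div q) h
                         * cong_binom_sum q n (r mod q) (\<lambda>x. int (nat x choose i)))"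
proof -
  define s t where "s = r div q" and "t = r mod q"
  define \<phi> where "\<phi> x = (if M dvd x - s then h ((x - s) div M) else 0)" for x
  have "cong_binom_sum (q * M) n r h = cong_binom_sum q n t \<phi>"
    unfolding \<phi>_def s_def t_def using assms by (intro cong_binom_sum_mult_modulus_residue) simp_all
  also have "\<dots> = cong_binom_sum q n t (\<lambda>x. \<Sum>i\<le>n. (-1) ^ i * cong_binom_sum M i s h * int (nat x choose i))"
  proof (rule cong_binom_sum_cong)
    show "0 \<le> t" "t < q"
      unfolding t_def using assms(1) by simp_all
    fix x assume "0 \<le> x" "t + q * x \<le> int n"
    moreover have "x \<le> q * x"
      using \<open>0 \<le> x\<close> assms(1) by (simp add: mult_le_cancel_right1)
    ultimately have "x \<le> int n"
      using \<open>0 \<le> t\<close> by linarith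
    have "cong_binom_sum M i s h = (\<Sum>l\<le>i. int (i choose l) * (-1) ^ l * \<phi> (int l))" for i
      unfolding cong_binom_sum_def cong_binom_term_def \<phi>_def by (intro sum.cong) simp_all
    then have "\<phi> x = (\<Sum>i\<le>nat x. int (nat x choose i) * (-1) ^ i * cong_binom_sum M i s h)"
      using newton_interpolation[of "\<lambda>l. \<phi> (int l)" "nat x"] \<open>0 \<le> x\<close> by simp
    also have "\<dots> = (\<Sum>i\<le>n. int (nat x choose i) * (-1) ^ i * cong_binom_sum M i s h)"
      using \<open>x \<le> int n\<close> by (intro sum.mono_neutral_left) (auto simp: binomial_eq_0)
    finally show "\<phi> x = (\<Sum>i\<le>n. (-1) ^ i * cong_binom_sum M i s h * int (nat x choose i))"
      by (simp add: ac_simps)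
  qed
  also have "\<dots> = (\<Sum>i\<le>n. (-1) ^ i * cong_binom_sum M i s h * cong_binom_sum q n t (\<lambda>x. int (nat x choose i)))"
    by (simp add: cong_binom_sum_sum cong_binom_sum_cmult)
  finally show ?thesis
    unfolding s_def t_def .
qed

lemma cong_binom_sum_choose_eq_0:
  assumes "0 \<le> t" "t < q" "(int n - t) div q < int i"
  shows "cong_binom_sum q n t (\<lambda>x. int (nat x choose i)) = 0"
proof -
  have "cong_binom_sum q n t (\<lambda>x. int (nat x choose i)) = cong_binom_sum q n t (\<lambda>_. 0)"
  proof (rule cong_binom_sum_cong[OF assms(1,2)])
    fix x assume "0 \<le> x" "t + q * x \<le> int n"
    then have "(q * x) div q \<le> (int n - t) div q"
      using assms(1,2) by (intro zdiv_mono1) simp_all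
    then have "nat x < i"
      using assms \<open>0 \<le> x\<close> by (simp add: nat_less_iff)
    then show "int (nat x choose i) = 0"
      by (simp add: binomial_eq_0)
  qed
  then show ?thesis
    by simp
qed

lemma poly_falling_factorial:
  assumes "0 \<le> x"
  shows "poly (\<Prod>j<i. [:- int j, 1:]) x = fact i * int (nat x choose i)"
proof -
  have "real_of_int (fact i * int (nat x choose i)) = real_of_int (\<Prod>j<i. int (nat x) - int j)"
    by (simp add: binomial_gbinomial gbinomial_mult_fact atLeast0LessThan)
  then show ?thesis
    unfolding poly_prod using assms by (simp only: of_int_eq_iff) simp
qed

lemma fact_multiplicity_dvd_choose_sum:
  assumes "prime p" "0 \<le> t" "t < int p"
  shows "int p ^ fact_multiplicity p n
           dvd int p ^ fact_multiplicity p (p * i) * cong_binom_sum (int p) n t (\<lambda>x. int (nat x choose i))"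
proof -
  define P where "P = (\<Prod>j<i. [:- int j, 1:])"
  have "degree P \<le> i"
    unfolding P_def using degree_prod_sum_le[of "{..<i}" "\<lambda>j. [:- int j, 1:]"] by simp
  have "cong_binom_sum (int p) n t (poly P) = cong_binom_sum (int p) n t (\<lambda>x. fact i * int (nat x choose i))"
    unfolding P_def by (rule cong_binom_sum_cong[OF assms(2,3) poly_falling_factorial])
  then have "int p ^ fact_multiplicity p n
      dvd int p ^ i * (fact i * cong_binom_sum (int p) n t (\<lambda>x. int (nat x choose i)))"
    using cong_binom_sum_prime_poly_dvd[OF assms(1) \<open>degree P \<le> i\<close>, of n t]
    by (simp add: cong_binom_sum_cmult)
  moreover obtain u where u: "(fact i :: nat) = p ^ multiplicity p (fact i :: nat) * u" "\<not> p dvd u"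
    using multiplicity_decompose'[of "fact i :: nat" p] prime_gt_1_nat[OF assms(1)] by auto
  then have "(fact i :: int) = int p ^ fact_multiplicity p i * int u"
    unfolding fact_multiplicity_def by (metis of_nat_fact of_nat_mult of_nat_power)
  moreover have "fact_multiplicity p (p * i) = i + fact_multiplicity p i"
    using fact_multiplicity_mult_add[OF assms(1) prime_gt_0_nat[OF assms(1)], of i] by simp
  ultimately have "int p ^ fact_multiplicity p n
      dvd int u * (int p ^ fact_multiplicity p (p * i) * cong_binom_sum (int p) n t (\<lambda>x. int (nat x choose i)))"
    by (simp add: power_add ac_simps)
  moreover have "coprime (int p) (int u)"
    using assms(1) u(2) by (intro prime_imp_coprime) (auto simp: of_nat_dvd_iff)
  then have "coprime (int p ^ fact_multiplicity p n) (int u)"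
    by simp
  ultimately show ?thesis
    by (simp add: coprime_dvd_mult_right_iff)
qed

lemma dvd_power_mult_cancel:
  fixes x y :: "'a::idom"
  assumes "x \<noteq> 0" "x ^ (a + b) dvd x ^ b * y"
  shows "x ^ a dvd y"
  using assms by (simp add: power_add mult.commute[of "x ^ a"])

lemma fleck_exponent_step_dvd:
  assumes "prime p"
    and IH: "\<And>n r. int p ^ fleck_exponent p (Suc b) n r dvd cong_binom_sum (int p ^ Suc b) n r h"
  shows "int p ^ fleck_exponent p (Suc (Suc b)) n r dvd cong_binom_sum (int p ^ Suc (Suc b)) n r h"
proof -
  have p0: "0 < p"
    using assms(1) prime_gt_0_nat by blast
  define s t where "s = r div int p" and "t = r mod int p"
  have t: "0 \<le> t" "t < int p"
    unfolding t_def using p0 by simp_all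
  define c where "c i = cong_binom_sum (int p) n t (\<lambda>x. int (nat x choose i))" for i
  have "int p ^ fleck_exponent p (Suc (Suc b)) n r dvd cong_binom_sum (int p ^ Suc b) i s h * c i" for i
  proof (cases "int i \<le> (int n - t) div int p")
    case True
    have "int p ^ (fleck_exponent p (Suc b) i s + fact_multiplicity p n)
        dvd int p ^ fact_multiplicity p (p * i) * (cong_binom_sum (int p ^ Suc b) i s h * c i)"
      using mult_dvd_mono[OF IH[of i s] fact_multiplicity_dvd_choose_sum[OF assms(1) t, of n i]]
      unfolding c_def by (simp add: power_add ac_simps)
    moreover have "fleck_exponent p (Suc (Suc b)) n r + fact_multiplicity p (p * i)
        \<le> fleck_exponent p (Suc b) i s + fact_multiplicity p n"
      using fleck_exponent_Suc_le[OF assms(1)] True unfolding s_def t_def by blast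
    ultimately have "int p ^ (fleck_exponent p (Suc (Suc b)) n r + fact_multiplicity p (p * i))
        dvd int p ^ fact_multiplicity p (p * i) * (cong_binom_sum (int p ^ Suc b) i s h * c i)"
      using le_imp_power_dvd dvd_trans by blast
    then show ?thesis
      by (rule dvd_power_mult_cancel[rotated]) (use p0 in simp)
  next
    case False
    then show ?thesis
      unfolding c_def using cong_binom_sum_choose_eq_0[OF t] by simp
  qed
  moreover have "cong_binom_sum (int p ^ Suc (Suc b)) n r h
      = (\<Sum>i\<le>n. (-1) ^ i * (cong_binom_sum (int p ^ Suc b) i s h * c i))"
    using cong_binom_sum_mult_modulus[of "int p" "int p ^ Suc b" n r h] p0
    by (simp add: ac_simps s_def t_def c_def)
  ultimately show ?thesis
    by (simp add: dvd_sum)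
qed

theorem cong_binom_sum_prime_power_dvd:
  assumes "prime p" "degree f \<le> d"
  shows "int p ^ fleck_exponent p \<alpha> n r dvd int p ^ d * cong_binom_sum (int p ^ \<alpha>) n r (poly f)"
proof (cases \<alpha>)
  case 0
  then show ?thesis
    using cong_binom_sum_1_poly_dvd[OF assms] by (simp add: fleck_exponent_0)
next
  case (Suc b)
  have "int p ^ fleck_exponent p (Suc b) n r dvd cong_binom_sum (int p ^ Suc b) n r (\<lambda>x. int p ^ d * poly f x)"
  proof (induction b arbitrary: n r)
    case 0
    show ?case
      using cong_binom_sum_prime_poly_dvd[OF assms] fleck_exponent_1[of p n r]
      by (simp add: cong_binom_sum_cmult)
  next
    case (Suc b)
    then show ?case
      by (rule fleck_exponent_step_dvd[OF assms(1)])
  qed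
  then show ?thesis
    unfolding Suc by (simp add: cong_binom_sum_cmult)
qed

section \<open>\<open>p\<close>-adic approximations\<close>

lemma binom_sum_approx_eq_cong_binom_sum:
  "binom_sum_approx p F \<alpha> n r m = cong_binom_sum (int p ^ \<alpha>) n r (poly (F m))"
proof -
  have "{k \<in> {0..int n}. [k = r] (mod int p ^ \<alpha>)} = int ` {k \<in> {..n}. int p ^ \<alpha> dvd int k - r}"
  proof (intro set_eqI iffI)
    fix k assume "k \<in> {k \<in> {0..int n}. [k = r] (mod int p ^ \<alpha>)}"
    then show "k \<in> int ` {k \<in> {..n}. int p ^ \<alpha> dvd int k - r}"
      by (auto simp: cong_iff_dvd_diff intro!: image_eqI[of k int "nat k"])
  qed (auto simp: cong_iff_dvd_diff)
  then have "binom_sum_approx p F \<alpha> n r m = (\<Sum>k\<in>{k \<in> {..n}. int p ^ \<alpha> dvd int k - r}.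
      int (n choose k) * (-1) ^ k * poly (F m) ((int k - r) div int p ^ \<alpha>))"
    unfolding binom_sum_approx_def by (simp add: sum.reindex)
  also have "\<dots> = cong_binom_sum (int p ^ \<alpha>) n r (poly (F m))"
    unfolding cong_binom_sum_def cong_binom_term_def by (rule sum.inter_filter) simp
  finally show ?thesis .
qed

lemma padic_poly_cutoff_remainder_dvd:
  assumes "padic_poly_seq p F"
  shows "int p ^ m dvd coeff (F m - poly_cutoff (Suc (padic_poly_deg p F)) (F m)) i"
proof (cases "i \<le> padic_poly_deg p F")
  case False
  obtain D where D: "\<And>m. degree (F m) \<le> D"
    using assms unfolding padic_poly_seq_def by blast
  have "coeff (F m) i = 0" if "D < i" for m i
    using D[of m] that by (simp add: coeff_eq_0)
  then have "\<forall>i>D. padic_zero p (\<lambda>m. coeff (F m) i)"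
    unfolding padic_zero_def by simp
  then have "\<forall>i>padic_poly_deg p F. padic_zero p (\<lambda>m. coeff (F m) i)"
    unfolding padic_poly_deg_def by (rule LeastI)
  then show ?thesis
    using False unfolding padic_zero_def by (simp add: coeff_poly_cutoff cong_0_iff)
qed (simp add: coeff_poly_cutoff)

lemma binom_sum_approx_dvd:
  assumes "prime p" "padic_poly_seq p F" "fleck_exponent p \<alpha> n r - padic_poly_deg p F \<le> m"
  shows "int p ^ (fleck_exponent p \<alpha> n r - padic_poly_deg p F) dvd binom_sum_approx p F \<alpha> n r m"
proof -
  define d E G where "d = padic_poly_deg p F" and "E = fleck_exponent p \<alpha> n r"
    and "G = poly_cutoff (Suc d) (F m)"
  have "degree G \<le> d"
    unfolding G_def by (rule degree_le) (simp add: coeff_poly_cutoff)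
  then have "int p ^ E dvd int p ^ d * cong_binom_sum (int p ^ \<alpha>) n r (poly G)"
    unfolding E_def by (rule cong_binom_sum_prime_power_dvd[OF assms(1)])
  then have "int p ^ (E - d + d) dvd int p ^ d * cong_binom_sum (int p ^ \<alpha>) n r (poly G)"
    by (cases "d \<le> E") simp_all
  then have "int p ^ (E - d) dvd cong_binom_sum (int p ^ \<alpha>) n r (poly G)"
    by (rule dvd_power_mult_cancel[rotated]) (use prime_gt_0_nat[OF assms(1)] in simp)
  moreover have "int p ^ (E - d) dvd cong_binom_sum (int p ^ \<alpha>) n r (poly (F m - G))"
    using dvd_trans[OF le_imp_power_dvd padic_poly_cutoff_remainder_dvd[OF assms(2)]] assms(3)
    unfolding G_def d_def E_def by (intro dvd_cong_binom_sum_poly) blast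
  moreover have "binom_sum_approx p F \<alpha> n r m
      = cong_binom_sum (int p ^ \<alpha>) n r (poly G) + cong_binom_sum (int p ^ \<alpha>) n r (poly (F m - G))"
    by (simp add: binom_sum_approx_eq_cong_binom_sum flip: cong_binom_sum_add)
  ultimately show ?thesis
    unfolding d_def E_def by simp
qed

theorem theorem1p1:
  fixes p \<alpha> n :: nat and r :: int and F :: "nat \<Rightarrow> int poly"
  assumes "prime p" and "padic_poly_seq p F"
  shows "padic_ord_ge p (binom_sum_approx p F \<alpha> n r)
           (int (multiplicity p (fact (floor_div_pow p \<alpha> n) :: nat))
            - int (padic_poly_deg p F)
            + int (carries p (frac_mod p \<alpha> r) (frac_mod p \<alpha> (int n - r))))"
proof -
  have bound: "int (multiplicity p (fact (floor_div_pow p \<alpha> n) :: nat)) - int (padic_poly_deg p F)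
      + int (carries p (frac_mod p \<alpha> r) (frac_mod p \<alpha> (int n - r)))
      = int (fleck_exponent p \<alpha> n r) - int (padic_poly_deg p F)"
    unfolding fleck_exponent_def fact_multiplicity_def by simp
  have exponent: "nat (int (fleck_exponent p \<alpha> n r) - int (padic_poly_deg p F))
      = fleck_exponent p \<alpha> n r - padic_poly_deg p F"
    by (simp only: nat_minus_as_int)
  show ?thesis
    unfolding padic_ord_ge_def bound exponent using binom_sum_approx_dvd[OF assms] by (simp add: cong_0_iff)
qed

end
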